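(* Let $R$ be a Noetherian ring, let $N=Ry_1+\cdots+Ry_n$ be an $R$-module, and let $x,y\in N$. Write $Y_i=N/Ry_i$ and $Y=N/Ry$. (1) If $\operatorname{ht}(N^*(x)/Y^*(x))>1$, then $N^*(y)\subseteq\sqrt{N^*(x)}$. (2) If $\operatorname{ht}(N^*(x)/Y_i^*(x))>1$ for $1\le i\le n$, then $\sqrt{\operatorname{tr}(N)}=\sqrt{N^*(x)}$. In particular $\operatorname{ht}(\operatorname{tr}(N))\le\mu(N^* )$, unless $\operatorname{tr}(N)=R$.
   Context: For an $R$-module $X$ and $z\in X$, $X^*(z)=\{f(z)\mid f\in\operatorname{Hom}_R(X,R)\}$; $Y^*(x)$ denotes the order ideal of the image of $x$ in $Y$ (which is contained in $N^*(x)$). For ideals $I\subseteq J$, $\operatorname{ht}(J/I)$ is the height of $J/I$ in $R/I$. $\operatorname{tr}(N)=\sum_{z\in N}N^*(z)$ is the trace ideal; $N^*=\operatorname{Hom}_R(N,R)$ and $\mu$ is the minimal number of generators. *)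

theory Defs
  imports Main "HOL-Library.Extended_Nat"
begin

definition is_ideal :: "'a::comm_ring_1 set \<Rightarrow> bool" where
  "is_ideal I \<longleftrightarrow> module.subspace ((*) :: 'a \<Rightarrow> 'a \<Rightarrow> 'a) I"

definition ideal_gen :: "'a::comm_ring_1 set \<Rightarrow> 'a set" where
  "ideal_gen S = module.span ((*) :: 'a \<Rightarrow> 'a \<Rightarrow> 'a) S"

definition noetherian_ring :: "'a::comm_ring_1 itself \<Rightarrow> bool" where
  "noetherian_ring _ \<longleftrightarrow> (\<forall>I::'a set. is_ideal I \<longrightarrow> (\<exists>S. finite S \<and> I = ideal_gen S))"

definition prime_ideal :: "'a::comm_ring_1 set \<Rightarrow> bool" where
  "prime_ideal P \<longleftrightarrow> is_ideal P \<and> P \<noteq> UNIV \<and> (\<forall>a b. a * b \<in> P \<longrightarrow> a \<in> P \<or> b \<in> P)"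

definition radical :: "'a::comm_ring_1 set \<Rightarrow> 'a set" where
  "radical I = {r. \<exists>k::nat. r ^ k \<in> I}"

text \<open>Height of the prime P/I in R/I (P a prime containing I): supremum of the lengths
 of chains of primes of R/I ending in P/I, i.e. chains of primes of R containing I.\<close>
definition prime_height_mod :: "'a::comm_ring_1 set \<Rightarrow> 'a set \<Rightarrow> enat" where
  "prime_height_mod I P = Sup {enat k | k. \<exists>c :: nat \<Rightarrow> 'a set.
      (\<forall>i\<le>k. prime_ideal (c i) \<and> I \<subseteq> c i) \<and> (\<forall>i<k. c i \<subset> c (Suc i)) \<and> c k = P}"

text \<open>ht(J/I): height of the ideal J/I in R/I, the infimum of the heights of the primes of
 R/I containing it (infinity if there are none, i.e. J/I = R/I).\<close>
definition height_mod :: "'a::comm_ring_1 set \<Rightarrow> 'a set \<Rightarrow> enat" where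
  "height_mod I J = Inf {prime_height_mod I P | P. prime_ideal P \<and> I \<subseteq> P \<and> J \<subseteq> P}"

definition height :: "'a::comm_ring_1 set \<Rightarrow> enat" where
  "height J = height_mod {0} J"

definition dual :: "('a::comm_ring_1 \<Rightarrow> 'm::ab_group_add \<Rightarrow> 'm) \<Rightarrow> ('m \<Rightarrow> 'a) set" where
  "dual scale = {f. module_hom scale ((*) :: 'a \<Rightarrow> 'a \<Rightarrow> 'a) f}"

definition order_ideal :: "('a::comm_ring_1 \<Rightarrow> 'm::ab_group_add \<Rightarrow> 'm) \<Rightarrow> 'm \<Rightarrow> 'a set" where
  "order_ideal scale z = {f z | f. f \<in> dual scale}"

text \<open>Order ideal of the image of z in N/Rw: by the universal property of the quotient,
 Hom_R(N/Rw, R) is identified with the linear forms on N vanishing at w.\<close>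
definition quot_order_ideal :: "('a::comm_ring_1 \<Rightarrow> 'm::ab_group_add \<Rightarrow> 'm) \<Rightarrow> 'm \<Rightarrow> 'm \<Rightarrow> 'a set" where
  "quot_order_ideal scale w z = {f z | f. f \<in> dual scale \<and> f w = 0}"

definition trace_ideal :: "('a::comm_ring_1 \<Rightarrow> 'm::ab_group_add \<Rightarrow> 'm) \<Rightarrow> 'a set" where
  "trace_ideal scale = ideal_gen (\<Union>z. order_ideal scale z)"

definition mu_dual :: "('a::comm_ring_1 \<Rightarrow> 'm::ab_group_add \<Rightarrow> 'm) \<Rightarrow> enat" where
  "mu_dual scale = Inf {enat k | k. \<exists>fs :: nat \<Rightarrow> 'm \<Rightarrow> 'a.
      (\<forall>i<k. fs i \<in> dual scale) \<and>
      (\<forall>g \<in> dual scale. \<exists>r :: nat \<Rightarrow> 'a. g = (\<lambda>z. \<Sum>i<k. r i * fs i z))}"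

end

theory Submission
  imports Defs
begin

text \<open>
  (1) If some \<open>f(y)\<close> with \<open>f \<in> N\<^sup>*\<close> avoided a prime \<open>P \<supseteq> N\<^sup>*(x)\<close>, take a prime \<open>P' \<subseteq> P\<close>
  minimal over \<open>Y\<^sup>*(x) + R f(x)\<close>. For every \<open>g \<in> N\<^sup>*\<close> the form \<open>f(y) g - g(y) f\<close> vanishes at
  \<open>y\<close>, so \<open>f(y) g(x) \<in> Y\<^sup>*(x) + R f(x)\<close>, whence \<open>N\<^sup>*(x) \<subseteq> P'\<close>. By Krull's principal ideal
  theorem in \<open>R/Y\<^sup>*(x)\<close> the prime \<open>P'\<close> has height at most one over \<open>Y\<^sup>*(x)\<close>, contradicting
  \<open>ht(N\<^sup>*(x)/Y\<^sup>*(x)) > 1\<close>.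

  (2) \<open>tr(N)\<close> is generated by the \<open>N\<^sup>*(y\<^sub>i)\<close>, so (1) gives \<open>\<surd>tr(N) = \<surd>N\<^sup>*(x)\<close>. Moreover
  \<open>N\<^sup>*(x)\<close> is generated by the values at \<open>x\<close> of \<open>\<mu>(N\<^sup>*)\<close> generators of \<open>N\<^sup>*\<close>, so by Krull's
  height theorem a minimal prime of \<open>N\<^sup>*(x)\<close>, which contains \<open>tr(N)\<close>, has height at most \<open>\<mu>(N\<^sup>*)\<close>.
\<close>

lemma module_mult: "module ((*) :: 'a::comm_ring_1 \<Rightarrow> 'a \<Rightarrow> 'a)"
  by unfold_locales (auto simp: algebra_simps)

lemmas is_idealI = module.subspaceI[OF module_mult, folded is_ideal_def]
lemmas ideal_zero = module.subspace_0[OF module_mult, folded is_ideal_def]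
lemmas ideal_add = module.subspace_add[OF module_mult, folded is_ideal_def]
lemmas ideal_mult_left = module.subspace_scale[OF module_mult, folded is_ideal_def]
lemmas ideal_diff = module.subspace_diff[OF module_mult, folded is_ideal_def]
lemmas ideal_sum = module.subspace_sum[OF module_mult, folded is_ideal_def]
lemmas ideal_Int = module.subspace_inter[OF module_mult, folded is_ideal_def]
lemmas ideal_Inter = module.subspace_Inter[OF module_mult, folded is_ideal_def]
lemmas is_ideal_UNIV = module.subspace_UNIV[OF module_mult, folded is_ideal_def]
lemmas is_ideal_ideal_gen = module.subspace_span[OF module_mult, folded is_ideal_def ideal_gen_def]
lemmas ideal_gen_superset = module.span_superset[OF module_mult, folded ideal_gen_def]
lemmas ideal_gen_minimal = module.span_minimal[OF module_mult, folded is_ideal_def ideal_gen_def]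
lemmas ideal_gen_mono = module.span_mono[OF module_mult, folded ideal_gen_def]
lemmas ideal_gen_insert = module.span_insert[OF module_mult, folded ideal_gen_def]
lemmas ideal_gen_Un = module.span_Un[OF module_mult, folded ideal_gen_def]
lemmas ideal_gen_empty = module.span_empty[OF module_mult, folded ideal_gen_def]
lemmas ideal_gen_eq_self_iff = module.span_eq_iff[OF module_mult, folded is_ideal_def ideal_gen_def]

lemma ideal_mult_right: "is_ideal I \<Longrightarrow> x \<in> I \<Longrightarrow> x * r \<in> I"
  using ideal_mult_left[of I x r] by (simp add: mult.commute)

lemma ideal_eq_UNIV_iff: "is_ideal I \<Longrightarrow> I = UNIV \<longleftrightarrow> 1 \<in> I"
  by (metis UNIV_I UNIV_eq_I ideal_mult_left mult.right_neutral)

lemma mem_ideal_gen_insert: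
  assumes "is_ideal I"
  shows "x \<in> ideal_gen (insert a I) \<longleftrightarrow> (\<exists>i\<in>I. \<exists>r. x = i + r * a)"
proof -
  have "ideal_gen I = I" using assms by (simp add: ideal_gen_eq_self_iff)
  then have "x \<in> ideal_gen (insert a I) \<longleftrightarrow> (\<exists>r. x - r * a \<in> I)"
    unfolding ideal_gen_insert by simp
  also have "\<dots> \<longleftrightarrow> (\<exists>i\<in>I. \<exists>r. x = i + r * a)"
    by (metis add_diff_cancel diff_add_cancel)
  finally show ?thesis .
qed

lemma mem_ideal_gen_Un:
  assumes "is_ideal I" "is_ideal J"
  shows "x \<in> ideal_gen (I \<union> J) \<longleftrightarrow> (\<exists>i\<in>I. \<exists>j\<in>J. x = i + j)"
proof -
  have "ideal_gen I = I" "ideal_gen J = J" using assms by (simp_all add: ideal_gen_eq_self_iff)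
  then show ?thesis unfolding ideal_gen_Un by blast
qed

lemma ideal_gen_insert_subset:
  "is_ideal J \<Longrightarrow> I \<subseteq> J \<Longrightarrow> a \<in> J \<Longrightarrow> ideal_gen (insert a I) \<subseteq> J"
  by (simp add: ideal_gen_minimal)

lemma ideal_gen_Un_subset:
  "is_ideal K \<Longrightarrow> I \<subseteq> K \<Longrightarrow> J \<subseteq> K \<Longrightarrow> ideal_gen (I \<union> J) \<subseteq> K"
  by (simp add: ideal_gen_minimal)

definition ideal_prod :: "'a::comm_ring_1 set \<Rightarrow> 'a set \<Rightarrow> 'a set" where
  "ideal_prod I J = ideal_gen {i * j | i j. i \<in> I \<and> j \<in> J}"

fun ideal_pow :: "'a::comm_ring_1 set \<Rightarrow> nat \<Rightarrow> 'a set" where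
  "ideal_pow I 0 = UNIV"
| "ideal_pow I (Suc n) = ideal_prod I (ideal_pow I n)"

lemma is_ideal_ideal_prod: "is_ideal (ideal_prod I J)"
  unfolding ideal_prod_def by (rule is_ideal_ideal_gen)

lemma mult_mem_ideal_prod: "i \<in> I \<Longrightarrow> j \<in> J \<Longrightarrow> i * j \<in> ideal_prod I J"
  unfolding ideal_prod_def by (rule subsetD[OF ideal_gen_superset]) auto

lemma ideal_prod_subset_right: "is_ideal J \<Longrightarrow> ideal_prod I J \<subseteq> J"
  unfolding ideal_prod_def by (rule ideal_gen_minimal) (auto simp: ideal_mult_left)

lemma is_ideal_ideal_pow: "is_ideal (ideal_pow I n)"
  by (cases n) (simp_all add: is_ideal_UNIV is_ideal_ideal_prod)

lemma ideal_pow_Suc_subset: "ideal_pow I (Suc n) \<subseteq> ideal_pow I n"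
  by (simp add: ideal_prod_subset_right is_ideal_ideal_pow)

lemma power_mem_ideal_pow: "x \<in> I \<Longrightarrow> x ^ n \<in> ideal_pow I n"
  by (induction n) (simp_all add: mult_mem_ideal_prod)

lemma is_ideal_image_mult:
  assumes "is_ideal I" shows "is_ideal ((\<lambda>i. i * g) ` I)"
proof (rule is_idealI)
  show "0 \<in> (\<lambda>i. i * g) ` I" using ideal_zero[OF assms] by (intro image_eqI[of _ _ 0]) simp_all
next
  fix x y assume "x \<in> (\<lambda>i. i * g) ` I" "y \<in> (\<lambda>i. i * g) ` I"
  then obtain i j where "i \<in> I" "j \<in> I" "x = i * g" "y = j * g" by blast
  then show "x + y \<in> (\<lambda>i. i * g) ` I"
    by (intro image_eqI[of _ _ "i + j"]) (simp_all add: distrib_right ideal_add[OF assms])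
next
  fix c x assume "x \<in> (\<lambda>i. i * g) ` I"
  then obtain i where "i \<in> I" "x = i * g" by blast
  then show "c * x \<in> (\<lambda>i. i * g) ` I"
    by (intro image_eqI[of _ _ "c * i"]) (simp_all add: mult.assoc ideal_mult_left[OF assms])
qed

lemma mem_ideal_prod_insert:
  assumes "is_ideal I" and z: "z \<in> ideal_prod I (ideal_gen (insert g G))"
  shows "\<exists>i\<in>I. \<exists>y\<in>ideal_prod I (ideal_gen G). z = i * g + y"
proof -
  let ?Ig = "(\<lambda>i. i * g) ` I" and ?IG = "ideal_prod I (ideal_gen G)"
  have "ideal_prod I (ideal_gen (insert g G)) \<subseteq> ideal_gen (?Ig \<union> ?IG)"
    unfolding ideal_prod_def[of I "ideal_gen (insert g G)"]
  proof (rule ideal_gen_minimal, safe)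
    fix i m assume i: "i \<in> I" and "m \<in> ideal_gen (insert g G)"
    then obtain k where k: "m - k * g \<in> ideal_gen G" unfolding ideal_gen_insert by auto
    have "i * m = (i * k) * g + i * (m - k * g)" by (simp add: algebra_simps)
    moreover have "(i * k) * g \<in> ?Ig" using ideal_mult_right[OF assms(1) i] by (rule imageI)
    moreover have "i * (m - k * g) \<in> ?IG" using mult_mem_ideal_prod[OF i k] .
    ultimately show "i * m \<in> ideal_gen (?Ig \<union> ?IG)"
      using ideal_gen_superset[of "?Ig \<union> ?IG"] ideal_add[OF is_ideal_ideal_gen] by (metis UnCI subsetD)
  qed (rule is_ideal_ideal_gen)
  with z have "z \<in> ideal_gen (?Ig \<union> ?IG)" by blast
  then obtain w y where "w \<in> ?Ig" "y \<in> ?IG" "z = w + y"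
    unfolding mem_ideal_gen_Un[OF is_ideal_image_mult[OF assms(1)] is_ideal_ideal_prod] by blast
  moreover from \<open>w \<in> ?Ig\<close> obtain i where "i \<in> I" "w = i * g" by blast
  ultimately have "i \<in> I" "y \<in> ?IG" "z = i * g + y" by simp_all
  then show ?thesis by blast
qed

lemma subset_ideal_gen_insert: "I \<subseteq> ideal_gen (insert a I)"
  using ideal_gen_superset[of "insert a I"] by blast

lemma mem_ideal_gen_insert_self: "a \<in> ideal_gen (insert a I)"
  using ideal_gen_superset[of "insert a I"] by blast

lemma subset_ideal_gen_Un1: "I \<subseteq> ideal_gen (I \<union> J)"
  using ideal_gen_superset[of "I \<union> J"] by blast

lemma subset_ideal_gen_Un2: "J \<subseteq> ideal_gen (I \<union> J)"
  using ideal_gen_superset[of "I \<union> J"] by blast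

lemma prime_ideal_is_ideal: "prime_ideal P \<Longrightarrow> is_ideal P"
  unfolding prime_ideal_def by blast

lemma one_not_in_prime_ideal: "prime_ideal P \<Longrightarrow> 1 \<notin> P"
  unfolding prime_ideal_def using ideal_eq_UNIV_iff by blast

lemma prime_idealD: "prime_ideal P \<Longrightarrow> a * b \<in> P \<Longrightarrow> a \<in> P \<or> b \<in> P"
  unfolding prime_ideal_def by blast

lemma prime_ideal_mult_not_mem: "prime_ideal P \<Longrightarrow> a \<notin> P \<Longrightarrow> b \<notin> P \<Longrightarrow> a * b \<notin> P"
  using prime_idealD by blast

lemma prime_ideal_power_mem: "prime_ideal P \<Longrightarrow> a ^ n \<in> P \<Longrightarrow> a \<in> P"
  by (induction n) (auto simp: one_not_in_prime_ideal dest: prime_idealD)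

lemma is_ideal_Union_chain:
  assumes "C \<noteq> {}" "chain\<^sub>\<subseteq> C" and ideals: "\<And>I. I \<in> C \<Longrightarrow> is_ideal I"
  shows "is_ideal (\<Union>C)"
proof (rule is_idealI)
  show "0 \<in> \<Union>C" using assms(1) ideals ideal_zero by blast
  show "r * x \<in> \<Union>C" if "x \<in> \<Union>C" for r x using that ideals ideal_mult_left by blast
  fix x y assume "x \<in> \<Union>C" "y \<in> \<Union>C"
  then obtain X Y where XY: "X \<in> C" "Y \<in> C" "x \<in> X" "y \<in> Y" by auto
  from assms(2) XY(1,2) have "X \<subseteq> Y \<or> Y \<subseteq> X" unfolding chain_subset_def by blast
  then show "x + y \<in> \<Union>C"
  proof
    assume "X \<subseteq> Y" then show ?thesis using XY ideals[of Y] ideal_add[of Y x y] by blast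
  next
    assume "Y \<subseteq> X" then show ?thesis using XY ideals[of X] ideal_add[of X x y] by blast
  qed
qed

lemma noetherian_ring_maximal:
  assumes "noetherian_ring TYPE('a::comm_ring_1)" and "F \<noteq> {}"
    and ideals: "\<And>I. I \<in> F \<Longrightarrow> is_ideal (I::'a set)"
  shows "\<exists>M\<in>F. \<forall>I\<in>F. M \<subseteq> I \<longrightarrow> I = M"
proof (rule Zorn_Lemma2, intro ballI)
  fix C assume C: "C \<in> chains F"
  then have CF: "C \<subseteq> F" and "chain\<^sub>\<subseteq> C" unfolding chains_def by blast+
  show "\<exists>U\<in>F. \<forall>X\<in>C. X \<subseteq> U"
  proof (cases "C = {}")
    case True then show ?thesis using \<open>F \<noteq> {}\<close> by auto
  next
    case False
    have "is_ideal (\<Union>C)" by (rule is_ideal_Union_chain[OF False \<open>chain\<^sub>\<subseteq> C\<close>]) (use CF ideals in blast)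
    then obtain S where S: "finite S" "\<Union>C = ideal_gen S"
      using assms(1) unfolding noetherian_ring_def by blast
    have "S \<subseteq> \<Union>C" using S(2) ideal_gen_superset by blast
    moreover have "subset.chain F C" using C by (simp add: chains_alt_def)
    ultimately obtain B where B: "B \<in> C" "S \<subseteq> B"
      using finite_subset_Union_chain[OF S(1) _ False] by blast
    have "\<Union>C \<subseteq> B" using S(2) ideal_gen_minimal[OF B(2) ideals[of B]] B(1) CF by auto
    then show ?thesis using B CF by blast
  qed
qed

lemma prime_ideal_avoiding:
  assumes N: "noetherian_ring TYPE('a::comm_ring_1)" and K: "is_ideal (K::'a set)"
    and "1 \<in> S" and mult_closed: "\<And>a b. a \<in> S \<Longrightarrow> b \<in> S \<Longrightarrow> a * b \<in> S" and "K \<inter> S = {}"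
  shows "\<exists>P. prime_ideal P \<and> K \<subseteq> P \<and> P \<inter> S = {}"
proof -
  let ?F = "{I. is_ideal I \<and> K \<subseteq> I \<and> I \<inter> S = {}}"
  have "K \<in> ?F" using K \<open>K \<inter> S = {}\<close> by blast
  then obtain P where P: "P \<in> ?F" and max: "\<forall>I\<in>?F. P \<subseteq> I \<longrightarrow> I = P"
    using noetherian_ring_maximal[OF N, of ?F] by blast
  then have "is_ideal P" by simp
  have meets: "\<exists>i\<in>P. \<exists>r. i + r * a \<in> S" if "a \<notin> P" for a
  proof -
    let ?Pa = "ideal_gen (insert a P)"
    have "a \<in> ?Pa" "P \<subseteq> ?Pa" using ideal_gen_superset[of "insert a P"] by auto
    then have "?Pa \<noteq> P" using that by blast
    then have "?Pa \<notin> ?F" using max \<open>P \<subseteq> ?Pa\<close> by blast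
    moreover have "is_ideal ?Pa" "K \<subseteq> ?Pa" using is_ideal_ideal_gen P \<open>P \<subseteq> ?Pa\<close> by auto
    ultimately have "?Pa \<inter> S \<noteq> {}" by simp
    then obtain x where "x \<in> ?Pa" "x \<in> S" by blast
    then show ?thesis using mem_ideal_gen_insert[OF \<open>is_ideal P\<close>] by auto
  qed
  have "prime_ideal P" unfolding prime_ideal_def
  proof (intro conjI allI impI)
    show "is_ideal P" by fact
    show "P \<noteq> UNIV" using P \<open>1 \<in> S\<close> by blast
  next
    fix a b assume ab: "a * b \<in> P"
    show "a \<in> P \<or> b \<in> P"
    proof (rule ccontr)
      assume "\<not> ?thesis"
      then have "a \<notin> P" "b \<notin> P" by simp_all
      obtain i1 r1 where i1: "i1 \<in> P" "i1 + r1 * a \<in> S" using meets[OF \<open>a \<notin> P\<close>] by blast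
      obtain i2 r2 where i2: "i2 \<in> P" "i2 + r2 * b \<in> S" using meets[OF \<open>b \<notin> P\<close>] by blast
      have "(i1 + r1 * a) * (i2 + r2 * b) = i1 * (i2 + r2 * b) + i2 * (r1 * a) + (r1 * r2) * (a * b)"
        by (simp add: algebra_simps)
      also have "\<dots> \<in> P"
        using i1 i2 ab \<open>is_ideal P\<close> by (meson ideal_add ideal_mult_left ideal_mult_right)
      finally show False using mult_closed[OF i1(2) i2(2)] P by blast
    qed
  qed
  then show ?thesis using P by blast
qed

lemma radical_superset: "I \<subseteq> radical I"
  unfolding radical_def by (force intro: exI[of _ 1])

lemma radical_mono: "I \<subseteq> J \<Longrightarrow> radical I \<subseteq> radical J"
  unfolding radical_def by blast

lemma radical_subset_prime_ideal: "prime_ideal P \<Longrightarrow> I \<subseteq> P \<Longrightarrow> radical I \<subseteq> P"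
  unfolding radical_def using prime_ideal_power_mem by blast

lemma prime_ideal_avoiding_non_radical:
  assumes N: "noetherian_ring TYPE('a::comm_ring_1)" and "is_ideal (I::'a set)" and "x \<notin> radical I"
  shows "\<exists>P. prime_ideal P \<and> I \<subseteq> P \<and> x \<notin> P"
proof -
  have "\<exists>P. prime_ideal P \<and> I \<subseteq> P \<and> P \<inter> range (\<lambda>k. x ^ k) = {}"
  proof (rule prime_ideal_avoiding[OF N \<open>is_ideal I\<close>])
    show "1 \<in> range (\<lambda>k. x ^ k)" by (force intro: range_eqI[of _ _ 0])
    show "a * b \<in> range (\<lambda>k. x ^ k)" if "a \<in> range (\<lambda>k. x ^ k)" "b \<in> range (\<lambda>k. x ^ k)" for a b
      using that by (auto simp: power_add[symmetric])
    show "I \<inter> range (\<lambda>k. x ^ k) = {}" using \<open>x \<notin> radical I\<close> unfolding radical_def by auto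
  qed
  then obtain P where "prime_ideal P" "I \<subseteq> P" "P \<inter> range (\<lambda>k. x ^ k) = {}" by blast
  moreover have "x \<in> range (\<lambda>k. x ^ k)" by (force intro: range_eqI[of _ _ 1])
  ultimately show ?thesis by blast
qed

definition minimal_prime_over :: "'a::comm_ring_1 set \<Rightarrow> 'a set \<Rightarrow> bool" where
  "minimal_prime_over K P \<longleftrightarrow> prime_ideal P \<and> K \<subseteq> P \<and>
     (\<forall>T. prime_ideal T \<longrightarrow> K \<subseteq> T \<longrightarrow> T \<subseteq> P \<longrightarrow> T = P)"

lemma minimal_prime_overD:
  assumes "minimal_prime_over K P"
  shows "prime_ideal P" "K \<subseteq> P" "\<And>T. prime_ideal T \<Longrightarrow> K \<subseteq> T \<Longrightarrow> T \<subseteq> P \<Longrightarrow> T = P"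
  using assms unfolding minimal_prime_over_def by blast+

lemma minimal_prime_over_if_subset_primes:
  assumes "minimal_prime_over I P" "K \<subseteq> P"
    and "\<And>T. prime_ideal T \<Longrightarrow> K \<subseteq> T \<Longrightarrow> T \<subseteq> P \<Longrightarrow> I \<subseteq> T"
  shows "minimal_prime_over K P"
  unfolding minimal_prime_over_def
proof (intro conjI allI impI)
  show "prime_ideal P" using minimal_prime_overD(1)[OF assms(1)] .
  show "K \<subseteq> P" by fact
  fix T assume T: "prime_ideal T" "K \<subseteq> T" "T \<subseteq> P"
  then show "T = P" using minimal_prime_overD(3)[OF assms(1)] assms(3) by blast
qed

lemma prime_ideal_Inter_chain:
  assumes "D \<noteq> {}" "\<And>T. T \<in> D \<Longrightarrow> prime_ideal (T::'a::comm_ring_1 set)" "chain\<^sub>\<subseteq> D"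
  shows "prime_ideal (\<Inter>D)"
  unfolding prime_ideal_def
proof (intro conjI allI impI)
  show "is_ideal (\<Inter>D)" using assms(2) prime_ideal_is_ideal by (intro ideal_Inter) blast
  show "\<Inter>D \<noteq> UNIV" using assms(1,2) one_not_in_prime_ideal by blast
  fix a b assume ab: "a * b \<in> \<Inter>D"
  show "a \<in> \<Inter>D \<or> b \<in> \<Inter>D"
  proof (rule ccontr)
    assume "\<not> ?thesis"
    then obtain T1 T2 where T: "T1 \<in> D" "T2 \<in> D" "a \<notin> T1" "b \<notin> T2" by blast
    from assms(3) T(1,2) have "T1 \<subseteq> T2 \<or> T2 \<subseteq> T1" unfolding chain_subset_def by blast
    then show False
    proof
      assume "T1 \<subseteq> T2" then show False using T ab prime_idealD[OF assms(2)[of T1], of a b] by blast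
    next
      assume "T2 \<subseteq> T1" then show False using T ab prime_idealD[OF assms(2)[of T2], of a b] by blast
    qed
  qed
qed

lemma exists_minimal_prime_over_below:
  assumes P: "prime_ideal P" and KP: "(K::'a::comm_ring_1 set) \<subseteq> P"
  shows "\<exists>Q. minimal_prime_over K Q \<and> Q \<subseteq> P"
proof -
  let ?B = "{T. prime_ideal T \<and> K \<subseteq> T \<and> T \<subseteq> P}"
  let ?A = "uminus ` ?B"
  \<comment> \<open>Zorn's lemma is applied to the complements, turning minimal primes into maximal sets.\<close>
  have "\<exists>M\<in>?A. \<forall>X\<in>?A. M \<subseteq> X \<longrightarrow> X = M"
  proof (rule Zorn_Lemma2, intro ballI)
    fix C assume C: "C \<in> chains ?A"
    show "\<exists>U\<in>?A. \<forall>X\<in>C. X \<subseteq> U"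
    proof (cases "C = {}")
      case True then show ?thesis using P KP by blast
    next
      case False
      let ?D = "uminus ` C"
      have DB: "?D \<subseteq> ?B" using C unfolding chains_def by auto
      have "chain\<^sub>\<subseteq> ?D" using C unfolding chains_def chain_subset_def by blast
      then have "prime_ideal (\<Inter>?D)" using prime_ideal_Inter_chain[of ?D] False DB by blast
      then have "\<Inter>?D \<in> ?B" using DB False by blast
      then have "- \<Inter>?D \<in> ?A" by blast
      moreover have "\<forall>X\<in>C. X \<subseteq> - \<Inter>?D" by auto
      ultimately show ?thesis by blast
    qed
  qed
  then obtain Q where Q: "Q \<in> ?B" and max: "\<forall>X\<in>?A. - Q \<subseteq> X \<longrightarrow> X = - Q" by blast
  have "minimal_prime_over K Q" unfolding minimal_prime_over_def
  proof (intro conjI allI impI)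
    show "prime_ideal Q" "K \<subseteq> Q" using Q by auto
    fix T assume T: "prime_ideal T" "K \<subseteq> T" "T \<subseteq> Q"
    then have "- T \<in> ?A" using Q by blast
    moreover have "- Q \<subseteq> - T" using T by blast
    ultimately show "T = Q" using max by blast
  qed
  then show ?thesis using Q by blast
qed

lemma exists_minimal_prime_over:
  assumes N: "noetherian_ring TYPE('a::comm_ring_1)" and K: "is_ideal (K::'a set)" and "K \<noteq> UNIV"
  shows "\<exists>P. minimal_prime_over K P"
proof -
  have "K \<inter> {1} = {}" using \<open>K \<noteq> UNIV\<close> ideal_eq_UNIV_iff[OF K] by blast
  then obtain P where "prime_ideal P" "K \<subseteq> P"
    using prime_ideal_avoiding[OF N K, of "{1}"] by auto
  then obtain Q where "minimal_prime_over K Q" using exists_minimal_prime_over_below by blast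
  then show ?thesis ..
qed

text \<open>The maximal ideal of \<open>R\<^sub>P/KR\<^sub>P\<close> is nilpotent.\<close>
lemma minimal_prime_over_locally_nilpotent:
  assumes N: "noetherian_ring TYPE('a::comm_ring_1)" and K: "is_ideal (K::'a set)"
    and min: "minimal_prime_over K P" and "b \<in> P"
  shows "\<exists>s t. s \<notin> P \<and> s * b ^ t \<in> K"
proof (rule ccontr)
  assume none: "\<not> ?thesis"
  let ?S = "{s * b ^ t | s t. s \<notin> P}"
  have P: "prime_ideal P" using minimal_prime_overD(1)[OF min] .
  have "\<exists>T. prime_ideal T \<and> K \<subseteq> T \<and> T \<inter> ?S = {}"
  proof (rule prime_ideal_avoiding[OF N K])
    show "1 \<in> ?S" using one_not_in_prime_ideal[OF P] by (intro CollectI exI[of _ 1] exI[of _ 0]) simp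
    show "x * y \<in> ?S" if xy: "x \<in> ?S" "y \<in> ?S" for x y
    proof -
      obtain s t s' t' where "s \<notin> P" "s' \<notin> P" "x = s * b ^ t" "y = s' * b ^ t'" using xy by blast
      then show ?thesis using prime_ideal_mult_not_mem[OF P, of s s']
        by (intro CollectI exI[of _ "s * s'"] exI[of _ "t + t'"]) (simp add: power_add algebra_simps)
    qed
    show "K \<inter> ?S = {}" using none by blast
  qed
  then obtain T where T: "prime_ideal T" "K \<subseteq> T" "T \<inter> ?S = {}" by blast
  have "T \<subseteq> P"
  proof
    fix x assume "x \<in> T"
    moreover have "x \<notin> P \<Longrightarrow> x \<in> ?S" by (intro CollectI exI[of _ x] exI[of _ 0]) simp
    ultimately show "x \<in> P" using T(3) by blast
  qed
  then have "T = P" using minimal_prime_overD(3)[OF min T(1,2)] by blast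
  moreover have "b \<in> ?S" using one_not_in_prime_ideal[OF P] by (intro CollectI exI[of _ 1] exI[of _ 1]) simp
  ultimately show False using T(3) \<open>b \<in> P\<close> by blast
qed

section \<open>Saturation at a prime\<close>

text \<open>Localisation at a prime \<open>P\<close> is never formed: an ideal of \<open>R\<^sub>P\<close> is represented by its
  contraction \<open>IR\<^sub>P \<inter> R\<close>, which is the saturation below.\<close>
definition saturation :: "'a::comm_ring_1 set \<Rightarrow> 'a set \<Rightarrow> 'a set" where
  "saturation P I = {r. \<exists>s. s \<notin> P \<and> s * r \<in> I}"

definition saturated :: "'a::comm_ring_1 set \<Rightarrow> 'a set \<Rightarrow> bool" where
  "saturated P I \<longleftrightarrow> is_ideal I \<and> saturation P I = I"

lemma saturationI: "s \<notin> P \<Longrightarrow> s * x \<in> I \<Longrightarrow> x \<in> saturation P I"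
  unfolding saturation_def by blast

lemma saturationE:
  assumes "x \<in> saturation P I" obtains s where "s \<notin> P" "s * x \<in> I"
  using assms unfolding saturation_def by blast

lemma saturation_mono: "I \<subseteq> J \<Longrightarrow> saturation P I \<subseteq> saturation P J"
  unfolding saturation_def by blast

lemma saturation_antimono: "Q \<subseteq> P \<Longrightarrow> saturation P I \<subseteq> saturation Q I"
  unfolding saturation_def by blast

lemma saturation_subset_prime_ideal:
  "prime_ideal Q \<Longrightarrow> I \<subseteq> Q \<Longrightarrow> Q \<subseteq> P \<Longrightarrow> saturation P I \<subseteq> Q"
  unfolding saturation_def using prime_idealD by blast

context
  fixes P :: "'a::comm_ring_1 set"
  assumes P: "prime_ideal P"
begin

lemma is_ideal_saturation:
  assumes "is_ideal I" shows "is_ideal (saturation P I)"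
proof (rule is_idealI)
  show "0 \<in> saturation P I" using ideal_zero[OF assms] one_not_in_prime_ideal[OF P]
    by (intro saturationI[of 1]) simp_all
next
  fix x y assume "x \<in> saturation P I" "y \<in> saturation P I"
  then obtain s t where st: "s \<notin> P" "t \<notin> P" "s * x \<in> I" "t * y \<in> I" by (metis saturationE)
  have "(s * t) * (x + y) = t * (s * x) + s * (t * y)" by (simp add: algebra_simps)
  also have "\<dots> \<in> I" using st by (meson ideal_add ideal_mult_left assms)
  finally show "x + y \<in> saturation P I"
    using prime_ideal_mult_not_mem[OF P st(1,2)] by (rule saturationI[rotated])
next
  fix c x assume "x \<in> saturation P I"
  then obtain s where s: "s \<notin> P" "s * x \<in> I" by (rule saturationE)
  have "s * (c * x) = c * (s * x)" by (simp add: algebra_simps)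
  also have "\<dots> \<in> I" using ideal_mult_left[OF assms s(2)] .
  finally show "c * x \<in> saturation P I" using s(1) by (rule saturationI[rotated])
qed

lemma saturation_superset: "I \<subseteq> saturation P I"
  using one_not_in_prime_ideal[OF P] by (auto intro: saturationI[of 1])

lemma saturation_idem: "saturation P (saturation P I) = saturation P I"
proof
  show "saturation P (saturation P I) \<subseteq> saturation P I"
  proof
    fix x assume "x \<in> saturation P (saturation P I)"
    then obtain s t where "s \<notin> P" "t \<notin> P" "t * (s * x) \<in> I" by (metis saturationE)
    then show "x \<in> saturation P I"
      using prime_ideal_mult_not_mem[OF P, of t s] by (intro saturationI[of "t * s"]) (simp_all add: mult.assoc)
  qed
qed (rule saturation_superset)

lemma saturated_saturation: "is_ideal I \<Longrightarrow> saturated P (saturation P I)"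
  unfolding saturated_def using is_ideal_saturation saturation_idem by blast

lemma saturated_Int: "saturated P I \<Longrightarrow> saturated P J \<Longrightarrow> saturated P (I \<inter> J)"
  unfolding saturated_def
  using ideal_Int saturation_mono[of "I \<inter> J"] saturation_superset[of "I \<inter> J"] by blast

end

section \<open>\<open>R\<^sub>P/KR\<^sub>P\<close> is Artinian for a minimal prime \<open>P\<close> over \<open>K\<close>\<close>

lemma exists_socle_element:
  assumes N: "noetherian_ring TYPE('a::comm_ring_1)" and A: "saturated P (A::'a set)"
    and "A \<noteq> UNIV" and "K \<subseteq> A" and min: "minimal_prime_over K P"
  shows "\<exists>g. g \<notin> A \<and> (\<forall>p\<in>P. p * g \<in> A)"
proof -
  have iA: "is_ideal A" and satA: "saturation P A = A" using A unfolding saturated_def by auto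
  define colon where "colon x = {r. r * x \<in> A}" for x
  have colon_ideal: "is_ideal (colon x)" for x
    unfolding colon_def by (rule is_idealI) (auto simp: algebra_simps intro: ideal_zero ideal_add ideal_mult_left iA)
  let ?F = "{colon x | x. x \<notin> A}"
  have "?F \<noteq> {}" using \<open>A \<noteq> UNIV\<close> by blast
  then obtain C where C: "C \<in> ?F" and max: "\<forall>I\<in>?F. C \<subseteq> I \<longrightarrow> I = C"
    using noetherian_ring_maximal[OF N, of ?F] colon_ideal by blast
  then obtain x where x: "x \<notin> A" "C = colon x" by blast
  \<comment> \<open>A maximal annihilator is prime; it lies between \<open>K\<close> and \<open>P\<close>, so it is \<open>P\<close>.\<close>
  have "prime_ideal C" unfolding prime_ideal_def
  proof (intro conjI allI impI)
    show "is_ideal C" using x colon_ideal by simp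
    show "C \<noteq> UNIV" using x unfolding colon_def by (metis (mono_tags) UNIV_I mem_Collect_eq mult_1)
  next
    fix a b assume ab: "a * b \<in> C"
    show "a \<in> C \<or> b \<in> C"
    proof (rule disjCI)
      assume "b \<notin> C"
      then have bx: "b * x \<notin> A" using x unfolding colon_def by auto
      have "C \<subseteq> colon (b * x)" using x ideal_mult_left[OF iA] unfolding colon_def
        by (auto simp: mult.left_commute) (metis mult.left_commute)
      then have "colon (b * x) = C" using max bx by blast
      moreover have "a \<in> colon (b * x)" using ab x unfolding colon_def by (simp add: mult.assoc)
      ultimately show "a \<in> C" by simp
    qed
  qed
  moreover have "C \<subseteq> P"
  proof
    fix r assume "r \<in> C"
    then have "r * x \<in> A" using x unfolding colon_def by simp
    then show "r \<in> P" using satA x saturationI by blast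
  qed
  moreover have "K \<subseteq> C" using \<open>K \<subseteq> A\<close> x ideal_mult_right[OF iA] unfolding colon_def by blast
  ultimately have "C = P" using minimal_prime_overD(3)[OF min] by blast
  then show ?thesis using x unfolding colon_def by blast
qed

text \<open>\<open>finite_length P A B\<close>: \<open>B\<close> arises from \<open>A\<close> by finitely many extensions that are simple
  after localising at \<open>P\<close>, so \<open>B\<^sub>P/A\<^sub>P\<close> has a composition series.\<close>
inductive finite_length :: "'a::comm_ring_1 set \<Rightarrow> 'a set \<Rightarrow> 'a set \<Rightarrow> bool" for P where
  finite_length_refl: "finite_length P A A"
| finite_length_step:
    "finite_length P A B \<Longrightarrow> (\<forall>p\<in>P. p * g \<in> B) \<Longrightarrow> finite_length P A (saturation P (ideal_gen (insert g B)))"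

lemma finite_length_trans: "finite_length P B C \<Longrightarrow> finite_length P A B \<Longrightarrow> finite_length P A C"
  by (induction rule: finite_length.induct) (auto intro: finite_length_step)

lemma eventually_const_if_two_valued:
  fixes H :: "nat \<Rightarrow> 'b set"
  assumes dec: "\<And>m n. m \<le> n \<Longrightarrow> H n \<subseteq> H m"
    and two: "\<And>n. H n = B \<or> H n = B'" and lower: "\<And>n. B \<subseteq> H n"
  shows "\<exists>m. \<forall>n\<ge>m. H n = H m"
proof (cases "\<exists>m. H m = B")
  case True
  then obtain m where m: "H m = B" by blast
  have "H n = H m" if "m \<le> n" for n using dec[OF that] lower[of n] m by blast
  then show ?thesis by blast
next
  case False
  then have "H n = H 0" for n using two by metis
  then show ?thesis by blast
qed

context
  fixes P :: "'a::comm_ring_1 set"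
  assumes P: "prime_ideal P"
begin

lemma saturated_saturation_insert:
  "is_ideal B \<Longrightarrow> saturated P (saturation P (ideal_gen (insert g B)))"
  using saturated_saturation[OF P is_ideal_ideal_gen] .

lemma subset_saturation_insert: "B \<subseteq> saturation P (ideal_gen (insert g B))"
  using subset_ideal_gen_insert saturation_superset[OF P] by blast

lemma finite_length_saturated: "finite_length P A B \<Longrightarrow> saturated P A \<Longrightarrow> saturated P B \<and> A \<subseteq> B"
proof (induction rule: finite_length.induct)
  case (finite_length_step A B g)
  then show ?case using saturated_saturation_insert subset_saturation_insert
    unfolding saturated_def by blast
qed simp

lemma saturated_between_step:
  assumes B: "saturated P B" and M: "saturated P M" and "B \<subseteq> M"
    and M_sub: "M \<subseteq> saturation P (ideal_gen (insert g B))" and g: "\<forall>p\<in>P. p * g \<in> B"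
  shows "M = B \<or> M = saturation P (ideal_gen (insert g B))"
proof (cases "g \<in> M")
  case True
  have iM: "is_ideal M" and sM: "saturation P M = M" using M unfolding saturated_def by auto
  have "ideal_gen (insert g B) \<subseteq> M" using ideal_gen_insert_subset[OF iM \<open>B \<subseteq> M\<close> True] .
  then have "saturation P (ideal_gen (insert g B)) \<subseteq> M" using saturation_mono sM by blast
  then show ?thesis using M_sub by blast
next
  case False
  have iM: "is_ideal M" and sM: "saturation P M = M" using M unfolding saturated_def by auto
  have iB: "is_ideal B" and sB: "saturation P B = B" using B unfolding saturated_def by auto
  have "M \<subseteq> B"
  proof
    fix x assume xM: "x \<in> M"
    then obtain s where s: "s \<notin> P" "s * x \<in> ideal_gen (insert g B)" using M_sub by (blast elim: saturationE)
    then obtain b r where br: "b \<in> B" "s * x = b + r * g" using mem_ideal_gen_insert[OF iB] by blast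
    show "x \<in> B"
    proof (cases "r \<in> P")
      case True
      then have "s * x \<in> B" using br g ideal_add[OF iB] by simp
      then show ?thesis using s(1) sB saturationI by blast
    next
      case False
      have "r * g = s * x - b" using br by simp
      also have "\<dots> \<in> M" using ideal_diff[OF iM] ideal_mult_left[OF iM xM] br \<open>B \<subseteq> M\<close> by blast
      finally have "g \<in> saturation P M" using False saturationI by blast
      then show ?thesis using \<open>g \<notin> M\<close> sM by simp
    qed
  qed
  then show ?thesis using \<open>B \<subseteq> M\<close> by blast
qed

lemma saturated_eq_if_Int_and_sum_eq:
  assumes I: "saturated P I" and I': "saturated P I'" and "I' \<subseteq> I" and L: "saturated P L"
    and Int_eq: "I \<inter> L = I' \<inter> L"
    and sum_eq: "saturation P (ideal_gen (I \<union> L)) = saturation P (ideal_gen (I' \<union> L))"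
  shows "I = I'"
proof
  have iI: "is_ideal I" and iI': "is_ideal I'" and iL: "is_ideal L" and sI': "saturation P I' = I'"
    using I I' L unfolding saturated_def by auto
  show "I \<subseteq> I'"
  proof
    fix x assume x: "x \<in> I"
    have "x \<in> saturation P (ideal_gen (I \<union> L))"
      using x subset_ideal_gen_Un1 saturation_superset[OF P] by blast
    then obtain s where s: "s \<notin> P" "s * x \<in> ideal_gen (I' \<union> L)"
      unfolding sum_eq by (rule saturationE)
    then obtain i l where il: "i \<in> I'" "l \<in> L" "s * x = i + l"
      using mem_ideal_gen_Un[OF iI' iL] by blast
    have "l = s * x - i" using il by simp
    also have "\<dots> \<in> I" using iI x il \<open>I' \<subseteq> I\<close> ideal_diff ideal_mult_left by blast
    finally have "l \<in> I'" using il Int_eq by blast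
    then have "s * x \<in> I'" using il ideal_add[OF iI'] by simp
    then show "x \<in> I'" using s(1) sI' saturationI by blast
  qed
qed fact

lemma saturation_sum_descending_chain_stable:
  fixes I :: "nat \<Rightarrow> 'a set"
  assumes B: "saturated P B" and g: "\<forall>p\<in>P. p * g \<in> B"
    and I: "\<And>n. saturated P (I n)" "\<And>n. I n \<subseteq> saturation P (ideal_gen (insert g B))"
    and dec: "\<And>m n. m \<le> n \<Longrightarrow> I n \<subseteq> I m"
  shows "\<exists>m. \<forall>n\<ge>m. saturation P (ideal_gen (I n \<union> B)) = saturation P (ideal_gen (I m \<union> B))"
proof -
  let ?B' = "saturation P (ideal_gen (insert g B))"
  define H where "H n = saturation P (ideal_gen (I n \<union> B))" for n
  have H_between: "B \<subseteq> H n" "H n \<subseteq> ?B'" for n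
  proof -
    show "B \<subseteq> H n" unfolding H_def using subset_ideal_gen_Un2 saturation_superset[OF P] by blast
    have "ideal_gen (I n \<union> B) \<subseteq> ?B'"
      using ideal_gen_Un_subset[OF is_ideal_saturation[OF P is_ideal_ideal_gen] I(2)
          subset_saturation_insert] .
    then have "H n \<subseteq> saturation P ?B'" unfolding H_def by (rule saturation_mono)
    then show "H n \<subseteq> ?B'" using saturation_idem[OF P] by simp
  qed
  have H_saturated: "saturated P (H n)" for n
    unfolding H_def by (rule saturated_saturation[OF P is_ideal_ideal_gen])
  have H_cases: "H n = B \<or> H n = ?B'" for n
    using saturated_between_step[OF B H_saturated H_between g] .
  have H_dec: "H n \<subseteq> H m" if "m \<le> n" for m n
  proof -
    have "I n \<union> B \<subseteq> I m \<union> B" using dec[OF that] by blast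
    then show ?thesis unfolding H_def by (intro saturation_mono ideal_gen_mono)
  qed
  show ?thesis
    using eventually_const_if_two_valued[of H B ?B', OF H_dec H_cases H_between(1)]
    unfolding H_def .
qed

text \<open>Induction on the composition series, comparing the chain with the last-but-one term \<open>B\<close>
  through the intersections \<open>I\<^sub>n \<inter> B\<close> and the sums \<open>I\<^sub>n + B\<close>.\<close>
lemma finite_length_descending_chain_stable:
  "finite_length P A B \<Longrightarrow> saturated P A \<Longrightarrow>
   (\<And>n. saturated P (I n) \<and> A \<subseteq> I n \<and> I n \<subseteq> B \<and> I (Suc n) \<subseteq> I n) \<Longrightarrow>
   \<exists>m. \<forall>n\<ge>m. I n = I m"
proof (induction arbitrary: I rule: finite_length.induct)
  case (finite_length_refl A)
  then have "I n = A" for n by blast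
  then show ?case by auto
next
  case (finite_length_step A B g)
  have B: "saturated P B" "A \<subseteq> B"
    using finite_length_saturated[OF finite_length_step.hyps(1) finite_length_step.prems(1)] by auto
  have ch: "saturated P (I n)" "A \<subseteq> I n" "I n \<subseteq> saturation P (ideal_gen (insert g B))"
    "I (Suc n) \<subseteq> I n" for n
    using finite_length_step.prems(2) by auto
  have dec: "I n \<subseteq> I m" if "m \<le> n" for m n
    by (rule lift_Suc_antimono_le[of I, OF ch(4) that])
  have "\<exists>m. \<forall>n\<ge>m. I n \<inter> B = I m \<inter> B"
  proof (rule finite_length_step.IH[OF finite_length_step.prems(1)])
    fix n
    show "saturated P (I n \<inter> B) \<and> A \<subseteq> I n \<inter> B \<and> I n \<inter> B \<subseteq> B \<and> I (Suc n) \<inter> B \<subseteq> I n \<inter> B"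
      using saturated_Int[OF P ch(1) B(1)] ch(2,4) B(2) by blast
  qed
  then obtain m1 where m1: "\<forall>n\<ge>m1. I n \<inter> B = I m1 \<inter> B" by blast
  from saturation_sum_descending_chain_stable[OF B(1) finite_length_step.hyps(2) ch(1,3) dec]
  obtain m2 where m2:
    "\<forall>n\<ge>m2. saturation P (ideal_gen (I n \<union> B)) = saturation P (ideal_gen (I m2 \<union> B))" ..
  define m where "m = max m1 m2"
  have "I n = I m" if "m \<le> n" for n
  proof (rule sym, rule saturated_eq_if_Int_and_sum_eq[OF ch(1) ch(1) dec[OF that] B(1)])
    have "m1 \<le> n" "m1 \<le> m" "m2 \<le> n" "m2 \<le> m" using that unfolding m_def by auto
    then have "I n \<inter> B = I m1 \<inter> B" "I m \<inter> B = I m1 \<inter> B"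
      "saturation P (ideal_gen (I n \<union> B)) = saturation P (ideal_gen (I m2 \<union> B))"
      "saturation P (ideal_gen (I m \<union> B)) = saturation P (ideal_gen (I m2 \<union> B))"
      using m1 m2 by blast+
    then show "I m \<inter> B = I n \<inter> B"
      and "saturation P (ideal_gen (I m \<union> B)) = saturation P (ideal_gen (I n \<union> B))"
      by simp_all
  qed
  then show ?case by blast
qed

lemma finite_length_UNIV:
  assumes N: "noetherian_ring TYPE('a)" and min: "minimal_prime_over K P"
  shows "saturated P A \<Longrightarrow> saturation P K \<subseteq> A \<Longrightarrow> finite_length P A UNIV"
proof (rule ccontr)
  assume A0: "saturated P A" "saturation P K \<subseteq> A" "\<not> finite_length P A UNIV"
  let ?F = "{A. saturated P A \<and> saturation P K \<subseteq> A \<and> \<not> finite_length P A UNIV}"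
  have "?F \<noteq> {}" using A0 by blast
  moreover have "\<And>I. I \<in> ?F \<Longrightarrow> is_ideal I" unfolding saturated_def by blast
  ultimately obtain A where A: "A \<in> ?F" and max: "\<forall>I\<in>?F. A \<subseteq> I \<longrightarrow> I = A"
    using noetherian_ring_maximal[OF N, of ?F] by blast
  have "A \<noteq> UNIV"
  proof
    assume "A = UNIV"
    then have "finite_length P A UNIV" by (simp add: finite_length_refl)
    then show False using A by blast
  qed
  have iA: "is_ideal A" using A unfolding saturated_def by blast
  have "K \<subseteq> A" using A saturation_superset[OF P, of K] by blast
  have "saturated P A" using A by blast
  obtain g where g: "g \<notin> A" "\<forall>p\<in>P. p * g \<in> A"
    using exists_socle_element[OF N \<open>saturated P A\<close> \<open>A \<noteq> UNIV\<close> \<open>K \<subseteq> A\<close> min] by blast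
  let ?B = "saturation P (ideal_gen (insert g A))"
  have "saturated P ?B" using saturated_saturation_insert[OF iA] .
  have "A \<subseteq> ?B" by (rule subset_saturation_insert)
  have "g \<in> ?B" using mem_ideal_gen_insert_self saturation_superset[OF P] by blast
  then have "?B \<noteq> A" using g(1) by blast
  then have "?B \<notin> ?F" using max \<open>A \<subseteq> ?B\<close> by blast
  moreover have "saturation P K \<subseteq> ?B" using A \<open>A \<subseteq> ?B\<close> by blast
  ultimately have "finite_length P ?B UNIV" using \<open>saturated P ?B\<close> by blast
  moreover have "finite_length P A ?B" using finite_length_step[OF finite_length_refl g(2)] .
  ultimately have "finite_length P A UNIV" by (rule finite_length_trans)
  then show False using A by blast
qed

lemma saturated_descending_chain_stable:
  assumes N: "noetherian_ring TYPE('a)" and K: "is_ideal K" and min: "minimal_prime_over K P"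
    and "\<And>n. saturated P (I n)" "\<And>n. K \<subseteq> I n" "\<And>n. I (Suc n) \<subseteq> I n"
  shows "\<exists>m. \<forall>n\<ge>m. I n = I m"
proof -
  have sK: "saturated P (saturation P K)" using saturated_saturation[OF P K] .
  show ?thesis
  proof (rule finite_length_descending_chain_stable[OF finite_length_UNIV[OF N min sK order_refl] sK])
    fix n
    have "saturation P K \<subseteq> I n"
      using saturation_mono[OF assms(5)[of n], of P] assms(4)[of n] unfolding saturated_def by simp
    then show "saturated P (I n) \<and> saturation P K \<subseteq> I n \<and> I n \<subseteq> UNIV \<and> I (Suc n) \<subseteq> I n"
      using assms(4,6) by simp
  qed
qed

end

section \<open>Nakayama's lemma at a prime\<close>

lemma saturation_sum_prod_insertE:
  assumes "prime_ideal T" "is_ideal I" "is_ideal L"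
    and "x \<in> saturation T (ideal_gen (L \<union> ideal_prod I (ideal_gen (insert g G))))"
  obtains s l i y where "s \<notin> T" "l \<in> L" "i \<in> I" "y \<in> ideal_prod I (ideal_gen G)"
    "s * x = l + i * g + y"
proof -
  obtain s where s: "s \<notin> T" "s * x \<in> ideal_gen (L \<union> ideal_prod I (ideal_gen (insert g G)))"
    using assms(4) by (rule saturationE)
  then obtain l z where lz: "l \<in> L" "z \<in> ideal_prod I (ideal_gen (insert g G))" "s * x = l + z"
    unfolding mem_ideal_gen_Un[OF assms(3) is_ideal_ideal_prod] by blast
  obtain i y where iy: "i \<in> I" "y \<in> ideal_prod I (ideal_gen G)" "z = i * g + y"
    using mem_ideal_prod_insert[OF assms(2) lz(2)] by blast
  show ?thesis
    by (rule that[OF s(1) lz(1) iy(1,2)]) (simp add: lz(3) iy(3) add.assoc)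
qed

lemma nakayama_saturation_finite:
  assumes T: "prime_ideal T" and I: "is_ideal I" "I \<subseteq> T" and L: "is_ideal L" and "finite G"
  shows "ideal_gen G \<subseteq> saturation T (ideal_gen (L \<union> ideal_prod I (ideal_gen G)))
    \<Longrightarrow> ideal_gen G \<subseteq> saturation T L"
  using \<open>finite G\<close>
proof (induction G rule: finite_induct)
  case empty
  show ?case by (simp add: ideal_gen_empty ideal_zero[OF is_ideal_saturation[OF T L]])
next
  case (insert g G)
  let ?M = "ideal_gen (insert g G)" and ?M' = "ideal_gen G"
  let ?sum = "\<lambda>M. saturation T (ideal_gen (L \<union> ideal_prod I M))"
  have "g \<in> ?sum ?M" using insert.prems mem_ideal_gen_insert_self by blast
  then obtain s l i y where g: "s \<notin> T" "l \<in> L" "i \<in> I" "y \<in> ideal_prod I ?M'" "s * g = l + i * g + y"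
    by (rule saturation_sum_prod_insertE[OF T I(1) L])
  \<comment> \<open>\<open>u\<close> is a unit at \<open>T\<close> with \<open>u g \<in> L + I M'\<close>, which eliminates the generator \<open>g\<close>.\<close>
  define u where "u = s - i"
  have u: "u \<notin> T"
    using g(1,3) I(2) ideal_add[OF prime_ideal_is_ideal[OF T], of u i] unfolding u_def by auto
  have ug: "u * g = l + y" using g(5) unfolding u_def by (simp add: algebra_simps)
  have "?M' \<subseteq> ?sum ?M'"
  proof
    fix m assume "m \<in> ?M'"
    then have "m \<in> ?sum ?M" using insert.prems ideal_gen_mono[of G "insert g G"] by blast
    then obtain s' l' i' y' where m: "s' \<notin> T" "l' \<in> L" "i' \<in> I" "y' \<in> ideal_prod I ?M'"
      "s' * m = l' + i' * g + y'"
      by (rule saturation_sum_prod_insertE[OF T I(1) L])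
    have "(u * s') * m = u * l' + i' * (u * g) + u * y'"
      unfolding mult.assoc m(5) by (simp add: algebra_simps)
    also have "\<dots> = (u * l' + i' * l) + (i' * y + u * y')"
      unfolding ug by (simp add: algebra_simps)
    finally have "(u * s') * m = (u * l' + i' * l) + (i' * y + u * y')" .
    moreover have "u * l' + i' * l \<in> L"
      using m(2) g(2) by (intro ideal_add[OF L] ideal_mult_left[OF L])
    moreover have "i' * y + u * y' \<in> ideal_prod I ?M'"
      using g(4) m(4) by (intro ideal_add[OF is_ideal_ideal_prod] ideal_mult_left[OF is_ideal_ideal_prod])
    ultimately have "(u * s') * m \<in> ideal_gen (L \<union> ideal_prod I ?M')"
      unfolding mem_ideal_gen_Un[OF L is_ideal_ideal_prod] by blast
    then show "m \<in> ?sum ?M'"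
      using prime_ideal_mult_not_mem[OF T u m(1)] by (rule saturationI[rotated])
  qed
  then have M': "?M' \<subseteq> saturation T L" by (rule insert.IH)
  have "l \<in> saturation T L" using g(2) saturation_superset[OF T] by blast
  moreover have "y \<in> saturation T L" using M' g(4) ideal_prod_subset_right[OF is_ideal_ideal_gen] by blast
  ultimately have "u * g \<in> saturation T L" unfolding ug by (rule ideal_add[OF is_ideal_saturation[OF T L]])
  then have "g \<in> saturation T L" using saturationI[OF u] saturation_idem[OF T] by blast
  then have "insert g G \<subseteq> saturation T L" using M' ideal_gen_superset by blast
  then show ?case by (rule ideal_gen_minimal[OF _ is_ideal_saturation[OF T L]])
qed

lemma nakayama_saturation:
  assumes "noetherian_ring TYPE('a::comm_ring_1)" and "prime_ideal T" and "is_ideal I" "I \<subseteq> T"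
    and "is_ideal L" and "is_ideal (M::'a set)"
    and "M \<subseteq> saturation T (ideal_gen (L \<union> ideal_prod I M))"
  shows "M \<subseteq> saturation T L"
proof -
  obtain G where "finite G" "M = ideal_gen G"
    using assms(1,6) unfolding noetherian_ring_def by blast
  then show ?thesis using nakayama_saturation_finite[OF assms(2-5)] assms(7) by blast
qed

section \<open>Krull's principal ideal and height theorems\<close>

text \<open>\<open>(Q\<^sup>n + J)R\<^sub>Q \<inter> R\<close>: the \<open>n\<close>-th symbolic power of \<open>Q/J\<close> in \<open>R/J\<close>, pulled back to \<open>R\<close>.\<close>
definition symbolic_power :: "'a::comm_ring_1 set \<Rightarrow> 'a set \<Rightarrow> nat \<Rightarrow> 'a set" where
  "symbolic_power Q J n = saturation Q (ideal_gen (ideal_pow Q n \<union> J))"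

context
  fixes Q J :: "'a::comm_ring_1 set"
  assumes Q: "prime_ideal Q" and J: "is_ideal J"
begin

lemma is_ideal_symbolic_power: "is_ideal (symbolic_power Q J n)"
  unfolding symbolic_power_def by (rule is_ideal_saturation[OF Q is_ideal_ideal_gen])

lemma saturation_symbolic_power: "saturation Q (symbolic_power Q J n) = symbolic_power Q J n"
  unfolding symbolic_power_def by (rule saturation_idem[OF Q])

lemma subset_symbolic_power: "J \<subseteq> symbolic_power Q J n" "ideal_pow Q n \<subseteq> symbolic_power Q J n"
  unfolding symbolic_power_def using subset_ideal_gen_Un1 subset_ideal_gen_Un2 saturation_superset[OF Q]
  by blast+

lemma symbolic_power_Suc_subset: "symbolic_power Q J (Suc n) \<subseteq> symbolic_power Q J n"
  unfolding symbolic_power_def using ideal_pow_Suc_subset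
  by (intro saturation_mono ideal_gen_mono) blast

text \<open>Since \<open>a \<notin> Q\<close>, the element \<open>a\<close> is a non-zero-divisor modulo each (\<open>Q\<close>-saturated)
  symbolic power, which lets the \<open>J + Ra\<close>-part of the hypothesis be absorbed.\<close>
lemma symbolic_power_subset_at_prime:
  assumes P: "prime_ideal P" and "a \<notin> Q"
    and eq: "saturation P (ideal_gen (symbolic_power Q J (Suc m) \<union> ideal_gen (insert a J)))
           = saturation P (ideal_gen (symbolic_power Q J m \<union> ideal_gen (insert a J)))"
  shows "symbolic_power Q J m
    \<subseteq> saturation P (ideal_gen (symbolic_power Q J (Suc m) \<union> ideal_prod (ideal_gen {a}) (symbolic_power Q J m)))"
proof
  let ?Qn = "symbolic_power Q J" and ?K = "ideal_gen (insert a J)"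
  have iQn: "is_ideal (?Qn n)" for n by (rule is_ideal_symbolic_power)
  fix x assume x: "x \<in> ?Qn m"
  then have "x \<in> saturation P (ideal_gen (?Qn (Suc m) \<union> ?K))"
    unfolding eq using subset_ideal_gen_Un1 saturation_superset[OF P] by blast
  then obtain s where s: "s \<notin> P" "s * x \<in> ideal_gen (?Qn (Suc m) \<union> ?K)"
    by (rule saturationE)
  then obtain y k where yk: "y \<in> ?Qn (Suc m)" "k \<in> ?K" "s * x = y + k"
    unfolding mem_ideal_gen_Un[OF iQn is_ideal_ideal_gen] by blast
  then obtain j r where jr: "j \<in> J" "k = j + r * a" unfolding mem_ideal_gen_insert[OF J] by blast
  have "y \<in> ?Qn m" "j \<in> ?Qn m"
    using yk(1) symbolic_power_Suc_subset jr(1) subset_symbolic_power(1) by blast+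
  then have "s * x - y - j \<in> ?Qn m" by (intro ideal_diff[OF iQn] ideal_mult_left[OF iQn x])
  moreover have "a * r = s * x - y - j" using yk(3) jr(2) by (simp add: algebra_simps)
  ultimately have "r \<in> saturation Q (?Qn m)" by (intro saturationI[OF \<open>a \<notin> Q\<close>]) simp
  then have "r \<in> ?Qn m" by (simp only: saturation_symbolic_power)
  then have "a * r \<in> ideal_prod (ideal_gen {a}) (?Qn m)"
    by (intro mult_mem_ideal_prod) (simp add: ideal_gen_superset[THEN subsetD])
  moreover have "y + j \<in> ?Qn (Suc m)"
    using yk(1) jr(1) subset_symbolic_power(1) by (intro ideal_add[OF iQn]) blast+
  moreover have "s * x = (y + j) + a * r" using yk(3) jr(2) by (simp add: algebra_simps)
  ultimately have "s * x \<in> ideal_gen (?Qn (Suc m) \<union> ideal_prod (ideal_gen {a}) (?Qn m))"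
    unfolding mem_ideal_gen_Un[OF iQn is_ideal_ideal_prod] by blast
  then show "x \<in> saturation P (ideal_gen (?Qn (Suc m) \<union> ideal_prod (ideal_gen {a}) (?Qn m)))"
    using s(1) by (rule saturationI[rotated])
qed

text \<open>That \<open>R\<^sub>P/(J + Ra)R\<^sub>P\<close> is Artinian, together with Nakayama's lemma, makes the symbolic
  powers stationary.\<close>
lemma symbolic_power_stationary:
  assumes N: "noetherian_ring TYPE('a)" and min: "minimal_prime_over (ideal_gen (insert a J)) P"
    and "Q \<subseteq> P" and "a \<notin> Q"
  shows "\<exists>m. symbolic_power Q J m \<subseteq> symbolic_power Q J (Suc m)"
proof -
  let ?Qn = "symbolic_power Q J" and ?K = "ideal_gen (insert a J)"
  have P: "prime_ideal P" and "a \<in> P"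
    using minimal_prime_overD(1,2)[OF min] mem_ideal_gen_insert_self by blast+
  have iQn: "is_ideal (?Qn n)" for n by (rule is_ideal_symbolic_power)
  define In where "In n = saturation P (ideal_gen (?Qn n \<union> ?K))" for n
  have "\<exists>m. \<forall>n\<ge>m. In n = In m"
  proof (rule saturated_descending_chain_stable[OF P N is_ideal_ideal_gen min])
    show "saturated P (In n)" for n unfolding In_def by (rule saturated_saturation[OF P is_ideal_ideal_gen])
    show "?K \<subseteq> In n" for n unfolding In_def using subset_ideal_gen_Un2 saturation_superset[OF P] by blast
    show "In (Suc n) \<subseteq> In n" for n unfolding In_def using symbolic_power_Suc_subset
      by (intro saturation_mono ideal_gen_mono) blast
  qed
  then obtain m where m: "\<forall>n\<ge>m. In n = In m" by blast
  have "In (Suc m) = In m" using m[rule_format, OF le_SucI[OF order_refl]] .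
  then have "?Qn m \<subseteq> saturation P (ideal_gen (?Qn (Suc m) \<union> ideal_prod (ideal_gen {a}) (?Qn m)))"
    unfolding In_def by (rule symbolic_power_subset_at_prime[OF P \<open>a \<notin> Q\<close>])
  moreover have "ideal_gen {a} \<subseteq> P"
    using \<open>a \<in> P\<close> prime_ideal_is_ideal[OF P] by (simp add: ideal_gen_minimal)
  ultimately have "?Qn m \<subseteq> saturation P (?Qn (Suc m))"
    using nakayama_saturation[OF N P is_ideal_ideal_gen _ iQn iQn] by blast
  also have "\<dots> \<subseteq> saturation Q (?Qn (Suc m))" by (rule saturation_antimono[OF \<open>Q \<subseteq> P\<close>])
  also have "\<dots> = ?Qn (Suc m)" by (rule saturation_symbolic_power)
  finally show ?thesis by blast
qed

text \<open>Conversely a stationary symbolic power forces \<open>Q\<^sup>m R\<^sub>Q \<subseteq> J R\<^sub>Q\<close>, by Nakayama.\<close>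
lemma minimal_prime_over_if_symbolic_power_stationary:
  assumes N: "noetherian_ring TYPE('a)" and "J \<subseteq> Q"
    and stat: "symbolic_power Q J m \<subseteq> symbolic_power Q J (Suc m)"
  shows "minimal_prime_over J Q"
proof -
  have "ideal_pow Q m \<subseteq> symbolic_power Q J (Suc m)" using subset_symbolic_power(2)[of m] stat by blast
  then have "ideal_pow Q m \<subseteq> saturation Q (ideal_gen (J \<union> ideal_prod Q (ideal_pow Q m)))"
    by (simp add: symbolic_power_def Un_commute)
  then have pow: "ideal_pow Q m \<subseteq> saturation Q J"
    by (rule nakayama_saturation[OF N Q prime_ideal_is_ideal[OF Q] order_refl J is_ideal_ideal_pow])
  show ?thesis unfolding minimal_prime_over_def
  proof (intro conjI allI impI)
    fix T assume T: "prime_ideal T" "J \<subseteq> T" "T \<subseteq> Q"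
    have "x \<in> T" if "x \<in> Q" for x
    proof -
      have "x ^ m \<in> saturation Q J" using pow power_mem_ideal_pow[OF that] by blast
      then have "x ^ m \<in> T" using saturation_subset_prime_ideal[OF T] by blast
      then show ?thesis by (rule prime_ideal_power_mem[OF T(1)])
    qed
    then show "T = Q" using T(3) by blast
  qed (use Q \<open>J \<subseteq> Q\<close> in auto)
qed

lemma krull_principal_ideal_rel:
  assumes N: "noetherian_ring TYPE('a)" and min: "minimal_prime_over (ideal_gen (insert a J)) P"
    and "J \<subseteq> Q" and "Q \<subset> P"
  shows "minimal_prime_over J Q"
proof -
  have "a \<notin> Q"
  proof
    assume "a \<in> Q"
    then have "ideal_gen (insert a J) \<subseteq> Q"
      by (rule ideal_gen_insert_subset[OF prime_ideal_is_ideal[OF Q] \<open>J \<subseteq> Q\<close>])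
    then show False using minimal_prime_overD(3)[OF min Q] \<open>Q \<subset> P\<close> by blast
  qed
  then obtain m where "symbolic_power Q J m \<subseteq> symbolic_power Q J (Suc m)"
    using symbolic_power_stationary[OF N min] \<open>Q \<subset> P\<close> by blast
  then show ?thesis by (rule minimal_prime_over_if_symbolic_power_stationary[OF N \<open>J \<subseteq> Q\<close>])
qed

end

lemma exists_prime_covered_by:
  assumes N: "noetherian_ring TYPE('a::comm_ring_1)"
    and "prime_ideal Q0" "prime_ideal P" "Q0 \<subset> (P::'a set)"
  shows "\<exists>Q. prime_ideal Q \<and> Q0 \<subseteq> Q \<and> Q \<subset> P \<and>
           (\<forall>T. prime_ideal T \<longrightarrow> Q \<subseteq> T \<longrightarrow> T \<subseteq> P \<longrightarrow> T = Q \<or> T = P)"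
proof -
  let ?F = "{T. prime_ideal T \<and> Q0 \<subseteq> T \<and> T \<subset> P}"
  have "?F \<noteq> {}" using assms(2,4) by blast
  moreover have "\<And>T. T \<in> ?F \<Longrightarrow> is_ideal T" using prime_ideal_is_ideal by blast
  ultimately obtain Q where Q: "Q \<in> ?F" and max: "\<forall>T\<in>?F. Q \<subseteq> T \<longrightarrow> T = Q"
    using noetherian_ring_maximal[OF N, of ?F] by blast
  have "T = Q \<or> T = P" if T: "prime_ideal T" "Q \<subseteq> T" "T \<subseteq> P" for T
  proof (cases "T = P")
    case False
    then have "T \<in> ?F" using T Q by blast
    then show ?thesis using max T(2) by blast
  qed simp
  then show ?thesis using Q by blast
qed

lemma minimal_prime_over_ideal_gen_insert:
  assumes min: "minimal_prime_over (ideal_gen G) P" and "a \<in> P" "is_ideal K" "K \<subseteq> P"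
    and gen: "\<And>b. b \<in> G \<Longrightarrow> b \<noteq> a \<Longrightarrow> \<exists>s t. s \<notin> P \<and> s * b ^ t \<in> ideal_gen (insert a K)"
  shows "minimal_prime_over (ideal_gen (insert a K)) P"
proof (rule minimal_prime_over_if_subset_primes[OF min])
  have P: "prime_ideal P" using minimal_prime_overD(1)[OF min] .
  show "ideal_gen (insert a K) \<subseteq> P"
    by (rule ideal_gen_insert_subset[OF prime_ideal_is_ideal[OF P] \<open>K \<subseteq> P\<close> \<open>a \<in> P\<close>])
  fix T assume T: "prime_ideal T" "ideal_gen (insert a K) \<subseteq> T" "T \<subseteq> P"
  have "b \<in> T" if "b \<in> G" for b
  proof (cases "b = a")
    case True
    then show ?thesis using T(2) mem_ideal_gen_insert_self by blast
  next
    case False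
    then obtain s t where "s \<notin> P" "s * b ^ t \<in> T" using gen[OF \<open>b \<in> G\<close>] T(2) by blast
    then have "b ^ t \<in> T" using prime_idealD[OF T(1)] T(3) by blast
    then show ?thesis by (rule prime_ideal_power_mem[OF T(1)])
  qed
  then have "G \<subseteq> T" by blast
  then show "ideal_gen G \<subseteq> T" by (rule ideal_gen_minimal[OF _ prime_ideal_is_ideal[OF T(1)]])
qed

lemma exists_generator_minimal_prime_over_insert:
  assumes min: "minimal_prime_over (ideal_gen G) P" and Q: "prime_ideal Q" "Q \<subset> P"
    and covered: "\<And>T. prime_ideal T \<Longrightarrow> Q \<subseteq> T \<Longrightarrow> T \<subseteq> P \<Longrightarrow> T = Q \<or> T = P"
  shows "\<exists>a\<in>G. minimal_prime_over (ideal_gen (insert a Q)) P"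
proof -
  have P: "prime_ideal P" and GP: "ideal_gen G \<subseteq> P" using minimal_prime_overD[OF min] by blast+
  have "\<not> G \<subseteq> Q"
  proof
    assume "G \<subseteq> Q"
    then have "ideal_gen G \<subseteq> Q" by (rule ideal_gen_minimal[OF _ prime_ideal_is_ideal[OF Q(1)]])
    then show False using minimal_prime_overD(3)[OF min Q(1)] Q(2) by blast
  qed
  then obtain a where "a \<in> G" "a \<notin> Q" by blast
  have "a \<in> P" using GP ideal_gen_superset \<open>a \<in> G\<close> by blast
  have "minimal_prime_over (ideal_gen (insert a Q)) P"
  proof (rule minimal_prime_over_if_subset_primes[OF min])
    show "ideal_gen (insert a Q) \<subseteq> P"
      using ideal_gen_insert_subset[OF prime_ideal_is_ideal[OF P] _ \<open>a \<in> P\<close>] Q(2) by blast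
    fix T assume T: "prime_ideal T" "ideal_gen (insert a Q) \<subseteq> T" "T \<subseteq> P"
    then have "Q \<subseteq> T" "a \<in> T" using subset_ideal_gen_insert mem_ideal_gen_insert_self by blast+
    then have "T = P" using covered[OF T(1) _ T(3)] \<open>a \<notin> Q\<close> by blast
    then show "ideal_gen G \<subseteq> T" using GP by simp
  qed
  then show ?thesis using \<open>a \<in> G\<close> by blast
qed

lemma krull_height_step:
  assumes N: "noetherian_ring TYPE('a::comm_ring_1)" and "finite G" "a \<in> G"
    and min: "minimal_prime_over (ideal_gen (G::'a set)) P"
    and Q: "prime_ideal Q" "Q \<subset> P" and minQa: "minimal_prime_over (ideal_gen (insert a Q)) P"
  shows "\<exists>G'. finite G' \<and> card G' < card G \<and> minimal_prime_over (ideal_gen G') Q"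
proof -
  have GP: "ideal_gen G \<subseteq> P" using minimal_prime_overD(2)[OF min] .
  have "a \<in> P" using GP ideal_gen_superset \<open>a \<in> G\<close> by blast
  have iQ: "is_ideal Q" using prime_ideal_is_ideal[OF Q(1)] .
  \<comment> \<open>Each generator \<open>b \<noteq> a\<close> satisfies \<open>s b\<^sup>t = q + r a\<close> with \<open>s \<notin> P\<close> and \<open>q \<in> Q\<close>; the \<open>q\<close>'s
    replace the generators other than \<open>a\<close>.\<close>
  have "\<forall>b\<in>G - {a}. \<exists>s t q r. s \<notin> P \<and> q \<in> Q \<and> s * b ^ t = q + r * a"
  proof (intro ballI)
    fix b assume "b \<in> G - {a}"
    then have "b \<in> P" using GP ideal_gen_superset by blast
    then obtain s t where "s \<notin> P" "s * b ^ t \<in> ideal_gen (insert a Q)"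
      using minimal_prime_over_locally_nilpotent[OF N is_ideal_ideal_gen] minQa by blast
    then show "\<exists>s t q r. s \<notin> P \<and> q \<in> Q \<and> s * b ^ t = q + r * a"
      unfolding mem_ideal_gen_insert[OF iQ] by blast
  qed
  then obtain s t q r where sq: "\<And>b. b \<in> G - {a} \<Longrightarrow>
      s b \<notin> P \<and> q b \<in> Q \<and> s b * b ^ t b = q b + r b * a"
    by metis
  define G' where "G' = q ` (G - {a})"
  have "finite G'" unfolding G'_def using \<open>finite G\<close> by simp
  have "card G' \<le> card (G - {a})" unfolding G'_def by (rule card_image_le) (use \<open>finite G\<close> in simp)
  also have "\<dots> < card G" using \<open>finite G\<close> \<open>a \<in> G\<close> by (rule card_Diff1_less)
  finally have "card G' < card G" .
  have G'Q: "ideal_gen G' \<subseteq> Q" unfolding G'_def using sq by (intro ideal_gen_minimal[OF _ iQ]) blast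
  have "minimal_prime_over (ideal_gen (insert a (ideal_gen G'))) P"
  proof (rule minimal_prime_over_ideal_gen_insert[OF min \<open>a \<in> P\<close> is_ideal_ideal_gen])
    show "ideal_gen G' \<subseteq> P" using G'Q Q(2) by blast
    fix b assume "b \<in> G" "b \<noteq> a"
    then have "b \<in> G - {a}" by blast
    then have b: "s b \<notin> P" "q b \<in> ideal_gen G'" "s b * b ^ t b = q b + r b * a"
      using sq[of b] ideal_gen_superset[of G'] unfolding G'_def by auto
    then have "s b * b ^ t b \<in> ideal_gen (insert a (ideal_gen G'))"
      unfolding mem_ideal_gen_insert[OF is_ideal_ideal_gen] by blast
    then show "\<exists>s t. s \<notin> P \<and> s * b ^ t \<in> ideal_gen (insert a (ideal_gen G'))" using b(1) by blast
  qed
  then have "minimal_prime_over (ideal_gen G') Q"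
    using krull_principal_ideal_rel[OF Q(1) is_ideal_ideal_gen N _ G'Q Q(2)] by blast
  then show ?thesis using \<open>finite G'\<close> \<open>card G' < card G\<close> by blast
qed

theorem krull_height:
  assumes N: "noetherian_ring TYPE('a::comm_ring_1)" and "finite G"
    and "minimal_prime_over (ideal_gen (G::'a set)) P"
    and "\<forall>i\<le>k. prime_ideal (c i)" "\<forall>i<k. c i \<subset> c (Suc i)" "c k = P"
  shows "k \<le> card G"
  using assms(2-)
proof (induction k arbitrary: G P c)
  case (Suc k)
  have "prime_ideal (c k)" "prime_ideal P" "c k \<subset> P"
    using Suc.prems(3) Suc.prems(4)[rule_format, of k] Suc.prems(5) by auto
  then obtain Q where Q: "prime_ideal Q" "c k \<subseteq> Q" "Q \<subset> P"
    and "\<forall>T. prime_ideal T \<longrightarrow> Q \<subseteq> T \<longrightarrow> T \<subseteq> P \<longrightarrow> T = Q \<or> T = P"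
    using exists_prime_covered_by[OF N] by meson
  then have covered: "\<And>T. prime_ideal T \<Longrightarrow> Q \<subseteq> T \<Longrightarrow> T \<subseteq> P \<Longrightarrow> T = Q \<or> T = P" by blast
  obtain a where "a \<in> G" "minimal_prime_over (ideal_gen (insert a Q)) P"
    using exists_generator_minimal_prime_over_insert[OF Suc.prems(2) Q(1,3) covered] by blast
  then obtain G' where G': "finite G'" "card G' < card G" "minimal_prime_over (ideal_gen G') Q"
    using krull_height_step[OF N Suc.prems(1) _ Suc.prems(2) Q(1,3)] by blast
  have "k \<le> card G'"
  proof (rule Suc.IH[OF G'(1,3)])
    show "\<forall>i\<le>k. prime_ideal ((c(k := Q)) i)" using Suc.prems(3) Q(1) by auto
    show "\<forall>i<k. (c(k := Q)) i \<subset> (c(k := Q)) (Suc i)"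
    proof (intro allI impI)
      fix i assume "i < k"
      then have "c i \<subset> c (Suc i)" using Suc.prems(4) by simp
      then show "(c(k := Q)) i \<subset> (c(k := Q)) (Suc i)"
        using Q(2) \<open>i < k\<close> by (cases "Suc i = k") auto
    qed
    show "(c(k := Q)) k = Q" by simp
  qed
  then show ?case using G'(2) by simp
qed simp

lemma prime_height_mod_le:
  assumes "\<And>k c. \<forall>i\<le>k. prime_ideal (c i) \<and> I \<subseteq> c i \<Longrightarrow> \<forall>i<k. c i \<subset> c (Suc i) \<Longrightarrow> c k = P \<Longrightarrow> k \<le> r"
  shows "prime_height_mod I P \<le> enat r"
  unfolding prime_height_mod_def
proof (rule Sup_least)
  fix x assume "x \<in> {enat k | k. \<exists>c :: nat \<Rightarrow> 'a set.
      (\<forall>i\<le>k. prime_ideal (c i) \<and> I \<subseteq> c i) \<and> (\<forall>i<k. c i \<subset> c (Suc i)) \<and> c k = P}"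
  then show "x \<le> enat r" using assms by auto
qed

lemma height_mod_le_prime_height_mod:
  "prime_ideal P \<Longrightarrow> I \<subseteq> P \<Longrightarrow> J \<subseteq> P \<Longrightarrow> height_mod I J \<le> prime_height_mod I P"
  unfolding height_mod_def by (rule Inf_lower) blast

lemma prime_height_mod_le_one:
  assumes N: "noetherian_ring TYPE('a::comm_ring_1)" and J: "is_ideal (J::'a set)"
    and min: "minimal_prime_over (ideal_gen (insert a J)) P"
  shows "prime_height_mod J P \<le> 1"
proof -
  have "k \<le> 1" if c: "\<forall>i\<le>k. prime_ideal (c i) \<and> J \<subseteq> c i" "\<forall>i<k. c i \<subset> c (Suc i)" "c k = P"
    for k c
  proof (rule ccontr)
    assume "\<not> k \<le> 1"
    define k' where "k' = k - 2"
    have k: "k = Suc (Suc k')" using \<open>\<not> k \<le> 1\<close> unfolding k'_def by simp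
    have "c (Suc k') \<subset> P" "c k' \<subset> c (Suc k')" using c(2,3) k by auto
    moreover have "prime_ideal (c (Suc k'))" "J \<subseteq> c (Suc k')" "prime_ideal (c k')" "J \<subseteq> c k'"
      using c(1) k by auto
    ultimately have "minimal_prime_over J (c (Suc k'))"
      by (intro krull_principal_ideal_rel[OF _ J N min]) simp_all
    then show False using minimal_prime_overD(3) \<open>c k' \<subset> c (Suc k')\<close> \<open>prime_ideal (c k')\<close> \<open>J \<subseteq> c k'\<close>
      by blast
  qed
  then show ?thesis using prime_height_mod_le[of J P 1] by (simp add: one_enat_def)
qed

corollary prime_height_le_card:
  assumes "noetherian_ring TYPE('a::comm_ring_1)" "finite G" "minimal_prime_over (ideal_gen (G::'a set)) P"
  shows "prime_height_mod {0} P \<le> enat (card G)"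
  by (rule prime_height_mod_le) (use krull_height[OF assms] in blast)

section \<open>Order ideals and the trace ideal\<close>

context
  fixes scale :: "'a::comm_ring_1 \<Rightarrow> 'm::ab_group_add \<Rightarrow> 'm"
  assumes Mo: "module scale"
begin

lemma dual_iff: "f \<in> dual scale \<longleftrightarrow> (\<forall>x y. f (x + y) = f x + f y) \<and> (\<forall>c x. f (scale c x) = c * f x)"
  unfolding dual_def using module_hom_iff[of scale "(*)" f] Mo module_mult by auto

lemma dual_lincomb: "f \<in> dual scale \<Longrightarrow> g \<in> dual scale \<Longrightarrow> (\<lambda>z. a * f z + b * g z) \<in> dual scale"
  unfolding dual_iff by (auto simp: algebra_simps)

lemma dual_zero: "f \<in> dual scale \<Longrightarrow> f 0 = 0"
  unfolding dual_def using module_hom.zero[of scale "(*)" f] by simp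

lemma is_ideal_quot_order_ideal: "is_ideal (quot_order_ideal scale w z)"
proof (rule is_idealI)
  have "(\<lambda>z. 0) \<in> dual scale" unfolding dual_iff by simp
  then show "0 \<in> quot_order_ideal scale w z" unfolding quot_order_ideal_def by force
next
  fix u v assume "u \<in> quot_order_ideal scale w z" "v \<in> quot_order_ideal scale w z"
  then obtain f g where "f \<in> dual scale" "g \<in> dual scale" "u = f z" "v = g z" "f w = 0" "g w = 0"
    unfolding quot_order_ideal_def by blast
  moreover have "(\<lambda>x. 1 * f x + 1 * g x) \<in> dual scale" using calculation by (intro dual_lincomb)
  ultimately show "u + v \<in> quot_order_ideal scale w z" unfolding quot_order_ideal_def
    by (intro CollectI exI[of _ "\<lambda>x. 1 * f x + 1 * g x"]) simp
next
  fix r u assume "u \<in> quot_order_ideal scale w z"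
  then obtain f where "f \<in> dual scale" "u = f z" "f w = 0" unfolding quot_order_ideal_def by blast
  moreover have "(\<lambda>x. r * f x + 0 * f x) \<in> dual scale" using calculation by (intro dual_lincomb)
  ultimately show "r * u \<in> quot_order_ideal scale w z" unfolding quot_order_ideal_def
    by (intro CollectI exI[of _ "\<lambda>x. r * f x + 0 * f x"]) simp
qed

lemma order_ideal_eq_quot_order_ideal_zero: "order_ideal scale z = quot_order_ideal scale 0 z"
  unfolding order_ideal_def quot_order_ideal_def using dual_zero by auto

lemma is_ideal_order_ideal: "is_ideal (order_ideal scale z)"
  unfolding order_ideal_eq_quot_order_ideal_zero by (rule is_ideal_quot_order_ideal)

lemma quot_order_ideal_subset: "quot_order_ideal scale w z \<subseteq> order_ideal scale z"
  unfolding quot_order_ideal_def order_ideal_def by blast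

text \<open>For \<open>g \<in> N\<^sup>*\<close> the form \<open>f(y) g - g(y) f\<close> vanishes at \<open>y\<close>, so
  \<open>f(y) g(x) \<in> Y\<^sup>*(x) + R f(x)\<close>.\<close>
lemma order_ideal_subset_prime_ideal:
  assumes f: "f \<in> dual scale" and P: "prime_ideal P"
    and "quot_order_ideal scale y x \<subseteq> P" "f x \<in> P" "f y \<notin> P"
  shows "order_ideal scale x \<subseteq> P"
proof
  fix w assume "w \<in> order_ideal scale x"
  then obtain g where g: "g \<in> dual scale" "w = g x" unfolding order_ideal_def by blast
  let ?h = "\<lambda>z. f y * g z + (- g y) * f z"
  have "?h \<in> dual scale" using dual_lincomb[OF g(1) f] .
  moreover have "?h y = 0" by (simp add: mult.commute)
  ultimately have "?h x \<in> P" using assms(3) unfolding quot_order_ideal_def by blast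
  then have "?h x + g y * f x \<in> P"
    using prime_ideal_is_ideal[OF P] assms(4) by (metis ideal_add ideal_mult_left)
  moreover have "?h x + g y * f x = f y * w" using g(2) by (simp add: algebra_simps)
  ultimately have "f y * w \<in> P" by simp
  then show "w \<in> P" using assms(5) prime_idealD[OF P] by blast
qed

lemma order_ideal_subset_radical:
  assumes N: "noetherian_ring TYPE('a)"
    and ht: "height_mod (quot_order_ideal scale y x) (order_ideal scale x) > 1"
  shows "order_ideal scale y \<subseteq> radical (order_ideal scale x)"
proof
  let ?I = "order_ideal scale x" and ?J = "quot_order_ideal scale y x"
  fix v assume "v \<in> order_ideal scale y"
  then obtain f where f: "f \<in> dual scale" "v = f y" unfolding order_ideal_def by blast
  show "v \<in> radical ?I"
  proof (rule ccontr)
    assume "v \<notin> radical ?I"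
    then obtain P where P: "prime_ideal P" "?I \<subseteq> P" "v \<notin> P"
      using prime_ideal_avoiding_non_radical[OF N is_ideal_order_ideal] by blast
    have "f x \<in> ?I" unfolding order_ideal_def using f(1) by (intro CollectI exI[of _ f]) simp
    then have "ideal_gen (insert (f x) ?J) \<subseteq> P"
      using ideal_gen_insert_subset[OF prime_ideal_is_ideal[OF P(1)]] quot_order_ideal_subset P(2)
      by blast
    then obtain P' where min: "minimal_prime_over (ideal_gen (insert (f x) ?J)) P'" and "P' \<subseteq> P"
      using exists_minimal_prime_over_below[OF P(1)] by blast
    have P': "prime_ideal P'" and "?J \<subseteq> P'" "f x \<in> P'"
      using minimal_prime_overD(1,2)[OF min] subset_ideal_gen_insert mem_ideal_gen_insert_self
      by blast+
    moreover have "f y \<notin> P'" using \<open>P' \<subseteq> P\<close> P(3) f(2) by blast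
    ultimately have "?I \<subseteq> P'" by (rule order_ideal_subset_prime_ideal[OF f(1)])
    then have "height_mod ?J ?I \<le> prime_height_mod ?J P'"
      using height_mod_le_prime_height_mod[OF P' \<open>?J \<subseteq> P'\<close>] by blast
    also have "\<dots> \<le> 1" by (rule prime_height_mod_le_one[OF N is_ideal_quot_order_ideal min])
    finally show False using ht by simp
  qed
qed

lemma order_ideal_subset_trace_ideal: "order_ideal scale z \<subseteq> trace_ideal scale"
  unfolding trace_ideal_def using ideal_gen_superset by blast

lemma trace_ideal_subset_prime_ideal:
  assumes span: "module.span scale (ys ` {1..n}) = UNIV" and T: "prime_ideal T"
    and gens: "\<And>i. i \<in> {1..n} \<Longrightarrow> order_ideal scale (ys i) \<subseteq> T"
  shows "trace_ideal scale \<subseteq> T"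
  unfolding trace_ideal_def
proof (rule ideal_gen_minimal[OF _ prime_ideal_is_ideal[OF T]], safe)
  fix z v assume "v \<in> order_ideal scale z"
  then obtain f where f: "f \<in> dual scale" "v = f z" unfolding order_ideal_def by blast
  have "module.subspace scale (f -` T)"
    using module_hom.subspace_vimage[of scale "(*)" f T] f(1) prime_ideal_is_ideal[OF T]
    unfolding dual_def is_ideal_def by blast
  moreover have "f (ys i) \<in> T" if "i \<in> {1..n}" for i
    using gens[OF that] f(1) unfolding order_ideal_def by blast
  then have "ys ` {1..n} \<subseteq> f -` T" by blast
  ultimately have "module.span scale (ys ` {1..n}) \<subseteq> f -` T"
    by (rule module.span_minimal[OF Mo, rotated])
  then show "v \<in> T" using span f(2) by blast
qed

lemma radical_trace_ideal_eq:
  assumes N: "noetherian_ring TYPE('a)" and span: "module.span scale (ys ` {1..n}) = UNIV"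
    and ht: "\<forall>i\<in>{1..n}. height_mod (quot_order_ideal scale (ys i) x) (order_ideal scale x) > 1"
  shows "radical (trace_ideal scale) = radical (order_ideal scale x)"
proof
  show "radical (order_ideal scale x) \<subseteq> radical (trace_ideal scale)"
    by (rule radical_mono[OF order_ideal_subset_trace_ideal])
  show "radical (trace_ideal scale) \<subseteq> radical (order_ideal scale x)"
  proof
    fix v assume v: "v \<in> radical (trace_ideal scale)"
    show "v \<in> radical (order_ideal scale x)"
    proof (rule ccontr)
      assume "v \<notin> radical (order_ideal scale x)"
      then obtain T where T: "prime_ideal T" "order_ideal scale x \<subseteq> T" "v \<notin> T"
        using prime_ideal_avoiding_non_radical[OF N is_ideal_order_ideal] by blast
      have "trace_ideal scale \<subseteq> T"
      proof (rule trace_ideal_subset_prime_ideal[OF span T(1)])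
        fix i assume "i \<in> {1..n}"
        then have "order_ideal scale (ys i) \<subseteq> radical (order_ideal scale x)"
          using order_ideal_subset_radical[OF N] ht by blast
        also have "\<dots> \<subseteq> T" by (rule radical_subset_prime_ideal[OF T(1,2)])
        finally show "order_ideal scale (ys i) \<subseteq> T" .
      qed
      then show False using radical_subset_prime_ideal[OF T(1)] v T(3) by blast
    qed
  qed
qed

lemma order_ideal_eq_ideal_gen_values:
  assumes "\<forall>i<k. fs i \<in> dual scale" and "\<forall>g\<in>dual scale. \<exists>r. g = (\<lambda>z. \<Sum>i<k. r i * fs i z)"
  shows "order_ideal scale x = ideal_gen ((\<lambda>i. fs i x) ` {..<k})"
proof
  have "fs i x \<in> order_ideal scale x" if "i < k" for i
    unfolding order_ideal_def using assms(1) that by (intro CollectI exI[of _ "fs i"]) simp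
  then show "ideal_gen ((\<lambda>i. fs i x) ` {..<k}) \<subseteq> order_ideal scale x"
    by (intro ideal_gen_minimal[OF _ is_ideal_order_ideal]) auto
  show "order_ideal scale x \<subseteq> ideal_gen ((\<lambda>i. fs i x) ` {..<k})"
  proof
    fix w assume "w \<in> order_ideal scale x"
    then obtain g where g: "g \<in> dual scale" "w = g x" unfolding order_ideal_def by blast
    from bspec[OF assms(2) g(1)] obtain r where "g = (\<lambda>z. \<Sum>i<k. r i * fs i z)" ..
    then have "w = (\<Sum>i<k. r i * fs i x)" using g(2) by simp
    also have "\<dots> \<in> ideal_gen ((\<lambda>i. fs i x) ` {..<k})"
    proof (rule ideal_sum[OF is_ideal_ideal_gen])
      fix i assume "i \<in> {..<k}"
      then have "fs i x \<in> ideal_gen ((\<lambda>i. fs i x) ` {..<k})"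
        by (intro subsetD[OF ideal_gen_superset] image_eqI[of _ _ i]) simp_all
      then show "r i * fs i x \<in> ideal_gen ((\<lambda>i. fs i x) ` {..<k})"
        by (rule ideal_mult_left[OF is_ideal_ideal_gen])
    qed
    finally show "w \<in> ideal_gen ((\<lambda>i. fs i x) ` {..<k})" .
  qed
qed

lemma height_trace_ideal_le_mu_dual:
  assumes N: "noetherian_ring TYPE('a)"
    and rad: "radical (trace_ideal scale) = radical (order_ideal scale x)"
    and "trace_ideal scale \<noteq> UNIV"
  shows "height (trace_ideal scale) \<le> mu_dual scale"
  unfolding mu_dual_def
proof (rule Inf_greatest)
  fix e assume "e \<in> {enat k | k. \<exists>fs :: nat \<Rightarrow> 'm \<Rightarrow> 'a. (\<forall>i<k. fs i \<in> dual scale) \<and>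
      (\<forall>g \<in> dual scale. \<exists>r :: nat \<Rightarrow> 'a. g = (\<lambda>z. \<Sum>i<k. r i * fs i z))}"
  then obtain k fs where e: "e = enat k" and fs: "\<forall>i<k. fs i \<in> dual scale"
    "\<forall>g\<in>dual scale. \<exists>r. g = (\<lambda>z. \<Sum>i<k. r i * fs i z)" by blast
  let ?G = "(\<lambda>i. fs i x) ` {..<k}"
  have "order_ideal scale x \<noteq> UNIV" using order_ideal_subset_trace_ideal \<open>trace_ideal scale \<noteq> UNIV\<close> by blast
  then obtain P where min: "minimal_prime_over (order_ideal scale x) P"
    using exists_minimal_prime_over[OF N is_ideal_order_ideal] by blast
  have P: "prime_ideal P" using minimal_prime_overD(1)[OF min] .
  have "trace_ideal scale \<subseteq> P"
    using radical_superset rad radical_subset_prime_ideal[OF P minimal_prime_overD(2)[OF min]] by blast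
  then have "height (trace_ideal scale) \<le> prime_height_mod {0} P"
    unfolding height_def using height_mod_le_prime_height_mod[OF P] ideal_zero[OF prime_ideal_is_ideal[OF P]]
    by blast
  also have "\<dots> \<le> enat (card ?G)"
    using prime_height_le_card[OF N finite_imageI[OF finite_lessThan]] min
    unfolding order_ideal_eq_ideal_gen_values[OF fs] .
  also have "\<dots> \<le> enat k" using card_image_le[of "{..<k}" "\<lambda>i. fs i x"] by simp
  finally show "height (trace_ideal scale) \<le> e" using e by simp
qed

end

theorem proposition5p1:
  fixes scale :: "'a::comm_ring_1 \<Rightarrow> 'm::ab_group_add \<Rightarrow> 'm"
    and ys :: "nat \<Rightarrow> 'm" and n :: nat and x y :: 'm
  assumes "noetherian_ring TYPE('a)"
    and "module scale"
    and "module.span scale (ys ` {1..n}) = UNIV"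
  shows "(height_mod (quot_order_ideal scale y x) (order_ideal scale x) > 1 \<longrightarrow>
            order_ideal scale y \<subseteq> radical (order_ideal scale x))
       \<and> ((\<forall>i\<in>{1..n}. height_mod (quot_order_ideal scale (ys i) x) (order_ideal scale x) > 1) \<longrightarrow>
            radical (trace_ideal scale) = radical (order_ideal scale x)
            \<and> (trace_ideal scale \<noteq> UNIV \<longrightarrow> height (trace_ideal scale) \<le> mu_dual scale))"
proof (intro conjI impI)
  show "order_ideal scale y \<subseteq> radical (order_ideal scale x)"
    if "height_mod (quot_order_ideal scale y x) (order_ideal scale x) > 1"
    using order_ideal_subset_radical[OF assms(2,1) that] .
  assume ht: "\<forall>i\<in>{1..n}. height_mod (quot_order_ideal scale (ys i) x) (order_ideal scale x) > 1"
  then show rad: "radical (trace_ideal scale) = radical (order_ideal scale x)"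
    by (rule radical_trace_ideal_eq[OF assms(2,1,3)])
  show "height (trace_ideal scale) \<le> mu_dual scale" if "trace_ideal scale \<noteq> UNIV"
    using height_trace_ideal_le_mu_dual[OF assms(2,1) rad that] .
qed

end
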